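(* Let $\mathfrak S$ be a commutative semiring with multiplicative identity $1$ whose Jacobson radical (the intersection of all maximal ideals) is the zero ideal. Let $\sigma_{\mathfrak S}$ be a set of ideals of $\mathfrak S$ containing all maximal ideals of $\mathfrak S$, endowed with the ideal topology, and let $\mathcal S=\{\mathfrak a^{\uparrow}\mid \mathfrak a \text{ an ideal of }\mathfrak S\}$ be its subbase of closed sets. If $\mathcal S$ strongly disconnects $\sigma_{\mathfrak S}$, then $\mathfrak S$ has a non-trivial idempotent element, i.e. some $e\in\mathfrak S$ with $e^2=e$, $e\neq0$, $e\neq1$.
   Context: A semiring $(\mathfrak S,+,0,\cdot,1)$ has $(\mathfrak S,+,0)$ a commutative monoid, $(\mathfrak S,\cdot,1)$ a monoid, $0r=r0=0$, and two-sided distributivity; all semirings are commutative. An ideal is a nonempty proper subset closed under addition and under multiplication by elements of $\mathfrak S$; maximal means not properly contained in another ideal. For an ideal $\mathfrak a$, $\mathfrak a^{\uparrow}=\{\mathfrak x\in\sigma_{\mathfrak S}\mid\mathfrak a\subseteq\mathfrak x\}$; the ideal topology has these sets as a subbasis of closed sets. A closed subbase $\mathcal S$ of a space $X$ strongly disconnects $X$ if there exist non-empty $A,B\in\mathcal S$ with $X=A\cup B$ and $A\cap B=\emptyset$. *)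

theory Defs
  imports Main
begin

definition sr_ideal :: "'a::comm_semiring_1 set \<Rightarrow> bool" where
  "sr_ideal I \<longleftrightarrow> I \<noteq> {} \<and> I \<noteq> UNIV \<and>
     (\<forall>a\<in>I. \<forall>b\<in>I. a + b \<in> I) \<and> (\<forall>r. \<forall>a\<in>I. r * a \<in> I)"

definition sr_maximal_ideal :: "'a::comm_semiring_1 set \<Rightarrow> bool" where
  "sr_maximal_ideal M \<longleftrightarrow> sr_ideal M \<and> (\<forall>J. sr_ideal J \<and> M \<subseteq> J \<longrightarrow> J = M)"

definition jacobson_radical :: "'a::comm_semiring_1 set" where
  "jacobson_radical = \<Inter> {M. sr_maximal_ideal M}"

definition up_set :: "'a set set \<Rightarrow> 'a set \<Rightarrow> 'a set set" where
  "up_set \<sigma> a = {x \<in> \<sigma>. a \<subseteq> x}"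

definition ideal_subbase :: "'a::comm_semiring_1 set set \<Rightarrow> 'a set set set" where
  "ideal_subbase \<sigma> = {up_set \<sigma> a | a. sr_ideal a}"

definition strongly_disconnects :: "'b set set \<Rightarrow> 'b set \<Rightarrow> bool" where
  "strongly_disconnects S X \<longleftrightarrow>
     (\<exists>A\<in>S. \<exists>B\<in>S. A \<noteq> {} \<and> B \<noteq> {} \<and> X = A \<union> B \<and> A \<inter> B = {})"

end

theory Submission
  imports Defs
begin

text \<open>The two members \<open>a\<^sup>\<up>\<close>, \<open>b\<^sup>\<up>\<close> of the subbase that partition \<open>\<sigma>\<close> show that every
  maximal ideal contains exactly one of the ideals \<open>a\<close>, \<open>b\<close>. Since no maximal ideal contains
  both, \<open>a + b\<close> is the whole semiring, so \<open>x + y = 1\<close> for some \<open>x \<in> a\<close>, \<open>y \<in> b\<close>. Since every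
  maximal ideal contains one of them, \<open>x y \<in> a \<inter> b\<close> lies in the Jacobson radical, so
  \<open>x y = 0\<close>. Then \<open>x = x (x + y) = x\<^sup>2\<close>, and \<open>x \<noteq> 0, 1\<close> because \<open>1\<close> lies in neither ideal.\<close>

lemma sr_ideal_zero_mem:
  assumes "sr_ideal (I::'a::comm_semiring_1 set)" shows "0 \<in> I"
  using assms unfolding sr_ideal_def by (metis ex_in_conv mult_zero_left)

lemma sr_ideal_one_notin:
  assumes "sr_ideal (I::'a::comm_semiring_1 set)" shows "1 \<notin> I"
proof
  assume "1 \<in> I"
  then have "r \<in> I" for r using assms unfolding sr_ideal_def by (metis mult.right_neutral)
  then show False using assms unfolding sr_ideal_def by auto
qed

lemma sr_ideal_add_mem:
  "sr_ideal I \<Longrightarrow> a \<in> I \<Longrightarrow> b \<in> I \<Longrightarrow> a + b \<in> I"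
  unfolding sr_ideal_def by blast

lemma sr_ideal_mult_mem_left:
  "sr_ideal I \<Longrightarrow> a \<in> I \<Longrightarrow> r * a \<in> I"
  unfolding sr_ideal_def by blast

lemma sr_ideal_mult_mem_right:
  "sr_ideal I \<Longrightarrow> a \<in> I \<Longrightarrow> a * r \<in> I"
  unfolding sr_ideal_def by (metis mult.commute)

lemma sr_ideal_Union_chain:
  assumes "C \<noteq> {}" and "\<forall>I\<in>C. sr_ideal I" and "subset.chain C C"
  shows "sr_ideal (\<Union>C)"
  unfolding sr_ideal_def
proof (intro conjI ballI allI)
  show "\<Union>C \<noteq> {}" using assms(1,2) sr_ideal_zero_mem by blast
  show "\<Union>C \<noteq> UNIV" using assms(2) sr_ideal_one_notin by blast
next
  fix a b assume "a \<in> \<Union>C" "b \<in> \<Union>C"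
  then obtain X Y where "X \<in> C" "Y \<in> C" "a \<in> X" "b \<in> Y" by blast
  moreover have "X \<subseteq> Y \<or> Y \<subseteq> X" using assms(3) \<open>X \<in> C\<close> \<open>Y \<in> C\<close>
    unfolding subset.chain_def by blast
  ultimately show "a + b \<in> \<Union>C" using assms(2) sr_ideal_add_mem by (metis UnionI subsetD)
next
  fix r a assume "a \<in> \<Union>C"
  then show "r * a \<in> \<Union>C" using assms(2) sr_ideal_mult_mem_left by blast
qed

lemma sr_ideal_imp_maximal:
  assumes "sr_ideal (J::'a::comm_semiring_1 set)"
  obtains M where "sr_maximal_ideal M" and "J \<subseteq> M"
proof -
  let ?A = "{I. sr_ideal I \<and> J \<subseteq> I}"
  have "\<exists>M\<in>?A. \<forall>X\<in>?A. M \<subseteq> X \<longrightarrow> X = M"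
  proof (rule subset_Zorn_nonempty)
    show "?A \<noteq> {}" using assms by blast
  next
    fix C assume "C \<noteq> {}" "subset.chain ?A C"
    moreover from this have "C \<subseteq> ?A" unfolding subset.chain_def by blast
    moreover have "subset.chain C C" using \<open>subset.chain ?A C\<close> unfolding subset.chain_def by blast
    ultimately show "\<Union>C \<in> ?A" using sr_ideal_Union_chain by blast
  qed
  then obtain M where "M \<in> ?A" and "\<forall>X\<in>?A. M \<subseteq> X \<longrightarrow> X = M" by blast
  then have "sr_maximal_ideal M" and "J \<subseteq> M"
    unfolding sr_maximal_ideal_def by auto
  then show thesis using that by blast
qed

definition ideal_sum :: "'a::comm_semiring_1 set \<Rightarrow> 'a set \<Rightarrow> 'a set" where
  "ideal_sum a b = {x + y | x y. x \<in> a \<and> y \<in> b}"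

lemma ideal_sum_closed:
  assumes "sr_ideal a" and "sr_ideal b"
  shows "u \<in> ideal_sum a b \<Longrightarrow> v \<in> ideal_sum a b \<Longrightarrow> u + v \<in> ideal_sum a b"
    and "u \<in> ideal_sum a b \<Longrightarrow> r * u \<in> ideal_sum a b"
proof -
  assume "u \<in> ideal_sum a b" "v \<in> ideal_sum a b"
  then obtain x y x' y' where "u = x + y" "v = x' + y'" "x \<in> a" "y \<in> b" "x' \<in> a" "y' \<in> b"
    unfolding ideal_sum_def by blast
  moreover have "u + v = (x + x') + (y + y')" using calculation by (simp add: ac_simps)
  ultimately show "u + v \<in> ideal_sum a b"
    using assms sr_ideal_add_mem unfolding ideal_sum_def by blast
next
  assume "u \<in> ideal_sum a b"
  then obtain x y where "u = x + y" "x \<in> a" "y \<in> b" unfolding ideal_sum_def by blast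
  moreover have "r * u = r * x + r * y" using calculation by (simp add: distrib_left)
  ultimately show "r * u \<in> ideal_sum a b"
    using assms sr_ideal_mult_mem_left unfolding ideal_sum_def by blast
qed

lemma ideal_sum_upper:
  assumes "sr_ideal a" and "sr_ideal b"
  shows "a \<subseteq> ideal_sum a b" and "b \<subseteq> ideal_sum a b"
proof -
  have "x + 0 \<in> ideal_sum a b" if "x \<in> a" for x
    using that sr_ideal_zero_mem[OF assms(2)] unfolding ideal_sum_def by blast
  then show "a \<subseteq> ideal_sum a b" by auto
  have "0 + y \<in> ideal_sum a b" if "y \<in> b" for y
    using that sr_ideal_zero_mem[OF assms(1)] unfolding ideal_sum_def by blast
  then show "b \<subseteq> ideal_sum a b" by auto
qed

lemma ideal_sum_eq_one_if_no_common_maximal: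
  assumes "sr_ideal a" and "sr_ideal b"
    and "\<And>M. sr_maximal_ideal M \<Longrightarrow> \<not> (a \<subseteq> M \<and> b \<subseteq> M)"
  obtains x y where "x \<in> a" and "y \<in> b" and "x + y = 1"
proof -
  have "1 \<in> ideal_sum a b"
  proof (rule ccontr)
    assume "1 \<notin> ideal_sum a b"
    then have "sr_ideal (ideal_sum a b)"
      using ideal_sum_closed[OF assms(1,2)] ideal_sum_upper[OF assms(1,2)]
        sr_ideal_zero_mem[OF assms(1)] unfolding sr_ideal_def by blast
    then obtain M where "sr_maximal_ideal M" and "ideal_sum a b \<subseteq> M"
      using sr_ideal_imp_maximal by blast
    then show False using assms(3) ideal_sum_upper[OF assms(1,2)] by blast
  qed
  then show thesis using that unfolding ideal_sum_def by force
qed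

lemma idempotent_if_sum_one_mult_zero:
  fixes x y :: "'a::comm_semiring_1"
  assumes "x + y = 1" and "x * y = 0"
  shows "x * x = x"
proof -
  have "x = x * (x + y)" using assms(1) by simp
  also have "\<dots> = x * x" using assms(2) by (simp add: distrib_left)
  finally show ?thesis by simp
qed

theorem proposition3p11:
  fixes \<sigma> :: "'a::comm_semiring_1 set set"
  assumes "jacobson_radical = ({0} :: 'a set)"
    and "\<forall>I\<in>\<sigma>. sr_ideal I"
    and "{M. sr_maximal_ideal M} \<subseteq> \<sigma>"
    and "strongly_disconnects (ideal_subbase \<sigma>) \<sigma>"
  shows "\<exists>e::'a. e * e = e \<and> e \<noteq> 0 \<and> e \<noteq> 1"
proof -
  obtain a b where a: "sr_ideal a" and b: "sr_ideal b"
    and cover: "\<sigma> = up_set \<sigma> a \<union> up_set \<sigma> b" and disjoint: "up_set \<sigma> a \<inter> up_set \<sigma> b = {}"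
    using assms(4) unfolding strongly_disconnects_def ideal_subbase_def by blast
  have in_one: "a \<subseteq> M \<or> b \<subseteq> M" if "sr_maximal_ideal M" for M
    using that assms(3) cover unfolding up_set_def by blast
  have "\<not> (a \<subseteq> M \<and> b \<subseteq> M)" if "sr_maximal_ideal M" for M
    using that assms(3) disjoint unfolding up_set_def by blast
  then obtain x y where "x \<in> a" "y \<in> b" "x + y = 1"
    using ideal_sum_eq_one_if_no_common_maximal[OF a b] by blast
  then have "x * y \<in> a \<inter> b" using a b sr_ideal_mult_mem_left sr_ideal_mult_mem_right by blast
  then have "x * y \<in> jacobson_radical" unfolding jacobson_radical_def using in_one by blast
  then have "x * x = x" using assms(1) \<open>x + y = 1\<close> idempotent_if_sum_one_mult_zero by blast
  moreover have "x \<noteq> 0" and "x \<noteq> 1"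
    using \<open>x + y = 1\<close> \<open>x \<in> a\<close> \<open>y \<in> b\<close> sr_ideal_one_notin[OF a] sr_ideal_one_notin[OF b] by auto
  ultimately show ?thesis by blast
qed

end
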